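(* Let $G=(V,E)$ be a tree, let $S_0=\{r\}$, let $u\in V\setminus\{r\}$, and let $\tau$ be the first round after which $u$ is informed. Let $p_{r,u}$ be the set of nodes on the unique path from $r$ to $u$ (including $r$ and $u$) and $D_{p_{r,u}}=\sum_{w\in p_{r,u}} d_w$, where $d_w$ is the degree of $w$. Then: (1) for \textsc{Pull}, $\mathbb{E}[\tau]=\Theta(D_{p_{r,u}}-d_r)$; (2) for every type of \textsc{RPull} (adversarial or random), $\mathbb{E}[\tau]=\Omega(D_{p_{r,u}}-d_r)$; (3) for adversarial \textsc{RPull}, $\mathbb{E}[\tau]=O(D_{p_{r,u}})$.
   Context: Rumor spreading proceeds in synchronous rounds. \textsc{Pull}: in each round, every uninformed node contacts a uniformly random neighbor and learns the rumor if that neighbor is informed (an informed node may serve arbitrarily many requests). \textsc{RPull}: in each round, every uninformed node sends a request to a uniformly random neighbor; every informed node $v$ receiving a nonempty set $R_v$ of requests selects exactly one node of $R_v$, which learns the rumor. In adversarial \textsc{RPull} the selected node is chosen by an adaptive adversary; in random \textsc{RPull} it is chosen uniformly at random, independently. *)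

theory Defs
  imports "HOL-Probability.Probability"
begin

definition simple_graph :: "'a set \<Rightarrow> ('a \<Rightarrow> 'a \<Rightarrow> bool) \<Rightarrow> bool" where
  "simple_graph V E \<longleftrightarrow> finite V \<and> (\<forall>x y. E x y \<longrightarrow> x \<in> V \<and> y \<in> V)
      \<and> (\<forall>x y. E x y \<longrightarrow> E y x) \<and> (\<forall>x. \<not> E x x)"

definition nbrs :: "('a \<Rightarrow> 'a \<Rightarrow> bool) \<Rightarrow> 'a \<Rightarrow> 'a set" where
  "nbrs E v = {w. E v w}"

definition deg :: "('a \<Rightarrow> 'a \<Rightarrow> bool) \<Rightarrow> 'a \<Rightarrow> nat" where
  "deg E v = card (nbrs E v)"

definition is_path :: "('a \<Rightarrow> 'a \<Rightarrow> bool) \<Rightarrow> 'a list \<Rightarrow> bool" where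
  "is_path E xs \<longleftrightarrow> xs \<noteq> [] \<and> distinct xs \<and> successively E xs"

definition is_cycle :: "('a \<Rightarrow> 'a \<Rightarrow> bool) \<Rightarrow> 'a list \<Rightarrow> bool" where
  "is_cycle E xs \<longleftrightarrow> length xs \<ge> 3 \<and> distinct xs \<and> successively E xs \<and> E (last xs) (hd xs)"

definition connected_graph :: "'a set \<Rightarrow> ('a \<Rightarrow> 'a \<Rightarrow> bool) \<Rightarrow> bool" where
  "connected_graph V E \<longleftrightarrow> (\<forall>x\<in>V. \<forall>y\<in>V. \<exists>xs. is_path E xs \<and> hd xs = x \<and> last xs = y)"

definition is_tree :: "'a set \<Rightarrow> ('a \<Rightarrow> 'a \<Rightarrow> bool) \<Rightarrow> bool" where
  "is_tree V E \<longleftrightarrow> simple_graph V E \<and> V \<noteq> {} \<and> connected_graph V E \<and> \<not> (\<exists>xs. is_cycle E xs)"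

text \<open>The set of nodes on the (unique, in a tree) path from r to u, including r and u.\<close>
definition path_nodes :: "('a \<Rightarrow> 'a \<Rightarrow> bool) \<Rightarrow> 'a \<Rightarrow> 'a \<Rightarrow> 'a set" where
  "path_nodes E r u = set (THE xs. is_path E xs \<and> hd xs = r \<and> last xs = u)"

definition path_degree_sum :: "('a \<Rightarrow> 'a \<Rightarrow> bool) \<Rightarrow> 'a \<Rightarrow> 'a \<Rightarrow> nat" where
  "path_degree_sum E r u = (\<Sum>w\<in>path_nodes E r u. deg E w)"

text \<open>A history records, for each completed round, the request function of that round
  (c w = neighbour contacted by the uninformed node w) and the informed set after the round.\<close>
type_synonym 'a hist = "(('a \<Rightarrow> 'a) \<times> 'a set) list"

definition informed_at :: "'a \<Rightarrow> 'a hist \<Rightarrow> nat \<Rightarrow> 'a set" where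
  "informed_at r hs i = (if i = 0 then {r} else snd (hs ! (i - 1)))"

definition current :: "'a \<Rightarrow> 'a hist \<Rightarrow> 'a set" where
  "current r hs = informed_at r hs (length hs)"

text \<open>Each uninformed node independently contacts a uniformly random neighbour.
  (Values outside V - S are an irrelevant default.)\<close>
definition requests :: "'a set \<Rightarrow> ('a \<Rightarrow> 'a \<Rightarrow> bool) \<Rightarrow> 'a set \<Rightarrow> ('a \<Rightarrow> 'a) pmf" where
  "requests V E S = Pi_pmf (V - S) undefined (\<lambda>w. pmf_of_set (nbrs E w))"

definition req_set :: "'a set \<Rightarrow> 'a set \<Rightarrow> ('a \<Rightarrow> 'a) \<Rightarrow> 'a \<Rightarrow> 'a set" where
  "req_set V S c v = {w \<in> V - S. c w = v}"

text \<open>Distribution of the histories of the first t rounds, for a kernel giving the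
  outcome of the next round as a function of the full history.\<close>
fun traj :: "('h list \<Rightarrow> 'h pmf) \<Rightarrow> nat \<Rightarrow> 'h list pmf" where
  "traj K 0 = return_pmf []"
| "traj K (Suc t) = bind_pmf (traj K t) (\<lambda>hs. map_pmf (\<lambda>x. hs @ [x]) (K hs))"

definition pull_kernel :: "'a set \<Rightarrow> ('a \<Rightarrow> 'a \<Rightarrow> bool) \<Rightarrow> 'a \<Rightarrow> 'a hist \<Rightarrow> (('a \<Rightarrow> 'a) \<times> 'a set) pmf" where
  "pull_kernel V E r hs = (let S = current r hs in
     map_pmf (\<lambda>c. (c, S \<union> {w \<in> V - S. c w \<in> S})) (requests V E S))"

definition rpull_random_kernel :: "'a set \<Rightarrow> ('a \<Rightarrow> 'a \<Rightarrow> bool) \<Rightarrow> 'a \<Rightarrow> 'a hist \<Rightarrow> (('a \<Rightarrow> 'a) \<times> 'a set) pmf" where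
  "rpull_random_kernel V E r hs = (let S = current r hs in
     bind_pmf (requests V E S) (\<lambda>c.
       let A = {v \<in> S. req_set V S c v \<noteq> {}} in
       map_pmf (\<lambda>sel. (c, S \<union> sel ` A)) (Pi_pmf A undefined (\<lambda>v. pmf_of_set (req_set V S c v)))))"

text \<open>Adaptive adversary: a deterministic strategy which, knowing the whole history
  and the current requests c, names for every informed v the node adv hs c v it serves.\<close>
type_synonym 'a adversary = "'a hist \<Rightarrow> ('a \<Rightarrow> 'a) \<Rightarrow> 'a \<Rightarrow> 'a"

definition valid_adversary :: "'a set \<Rightarrow> 'a \<Rightarrow> 'a adversary \<Rightarrow> bool" where
  "valid_adversary V r adv \<longleftrightarrow> (\<forall>hs c v. v \<in> current r hs \<and> req_set V (current r hs) c v \<noteq> {}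
      \<longrightarrow> adv hs c v \<in> req_set V (current r hs) c v)"

definition rpull_adv_kernel :: "'a set \<Rightarrow> ('a \<Rightarrow> 'a \<Rightarrow> bool) \<Rightarrow> 'a \<Rightarrow> 'a adversary \<Rightarrow> 'a hist \<Rightarrow> (('a \<Rightarrow> 'a) \<times> 'a set) pmf" where
  "rpull_adv_kernel V E r adv hs = (let S = current r hs in
     map_pmf (\<lambda>c. (c, S \<union> adv hs c ` {v \<in> S. req_set V S c v \<noteq> {}})) (requests V E S))"

text \<open>Expected first round tau after which u is informed, via the tail-sum formula
  E[tau] = sum_{t>=0} P(tau > t), where tau > t iff u is not informed after any of
  rounds 0..t. (Equals infinity if tau is infinite with positive probability.)\<close>
definition expected_inform_time :: "'a \<Rightarrow> ('a hist \<Rightarrow> (('a \<Rightarrow> 'a) \<times> 'a set) pmf) \<Rightarrow> 'a \<Rightarrow> ennreal" where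
  "expected_inform_time r K u =
     (\<Sum>t. ennreal (measure_pmf.prob (traj K t) {hs. \<forall>i\<le>t. u \<notin> informed_at r hs i}))"

end

theory Submission
  imports Defs
begin

text \<open>
  In a tree, the informed set is always a subtree containing r, so the path r = P!0, \<dots>, P!k = u
  is informed in order: only its first uninformed node P!q (the frontier) can be informed in a
  round, and only by requesting its parent P!(q - 1), which it does with probability
  1 / deg (P!q). The potential summing deg (P!i) over the uninformed path nodes i \<ge> 1 starts at
  D - d_r and therefore drops in expectation by at most 1 per round under any of the processes,
  and by at least 1 under Pull; drift arguments give E[\<tau>] \<ge> (D - d_r)/2 in general and
  E[\<tau>] \<le> D - d_r for Pull.
  Under adversarial RPull the adversary can delay P!q only by serving another request sent to
  P!(q - 1); each time this permanently informs a neighbour of P!(q - 1), so adding the number of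
  uninformed neighbours of P!(q - 1) to twice the potential gives a quantity of drift at least 1,
  which is at most 2 D initially.
\<close>

lemma length_traj: "hs \<in> set_pmf (traj K t) \<Longrightarrow> length hs = t"
  by (induction t arbitrary: hs) auto

lemma traj_invariant:
  assumes "Inv []" "\<And>hs x. Inv hs \<Longrightarrow> x \<in> set_pmf (K hs) \<Longrightarrow> Inv (hs @ [x])"
  shows "hs \<in> set_pmf (traj K t) \<Longrightarrow> Inv hs"
  using assms by (induction t arbitrary: hs) auto

lemma nn_integral_traj_Suc_add:
  "(\<integral>\<^sup>+hs. \<Phi> hs \<partial>traj K (Suc T)) + emeasure (traj K T) {hs. Q hs}
     = (\<integral>\<^sup>+hs. (\<integral>\<^sup>+x. \<Phi> (hs @ [x]) \<partial>K hs) + indicator {hs. Q hs} hs \<partial>traj K T)"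
  by (simp add: nn_integral_add)

lemma traj_drift_le:
  fixes \<Phi> :: "'h list \<Rightarrow> ennreal"
  assumes I0: "Inv []" and IS: "\<And>hs x. Inv hs \<Longrightarrow> x \<in> set_pmf (K hs) \<Longrightarrow> Inv (hs @ [x])"
    and drift: "\<And>hs. Inv hs \<Longrightarrow> (\<integral>\<^sup>+x. \<Phi> (hs @ [x]) \<partial>K hs) + indicator {hs. Q hs} hs \<le> \<Phi> hs"
  shows "(\<integral>\<^sup>+hs. \<Phi> hs \<partial>traj K T) + (\<Sum>t<T. emeasure (traj K t) {hs. Q hs}) \<le> \<Phi> []"
proof (induction T)
  case (Suc T)
  have "(\<integral>\<^sup>+hs. \<Phi> hs \<partial>traj K (Suc T)) + emeasure (traj K T) {hs. Q hs} \<le> (\<integral>\<^sup>+hs. \<Phi> hs \<partial>traj K T)"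
    unfolding nn_integral_traj_Suc_add
    by (rule nn_integral_mono_AE, rule AE_pmfI) (use drift traj_invariant[of Inv K, OF I0 IS] in blast)
  then have "(\<integral>\<^sup>+hs. \<Phi> hs \<partial>traj K (Suc T)) + (\<Sum>t<Suc T. emeasure (traj K t) {hs. Q hs})
      \<le> (\<integral>\<^sup>+hs. \<Phi> hs \<partial>traj K T) + (\<Sum>t<T. emeasure (traj K t) {hs. Q hs})"
    by (simp only: sum.lessThan_Suc add.assoc[symmetric] add.commute[of _ "emeasure _ _"] add_right_mono)
  from this Suc show ?case by (rule order_trans)
qed simp

lemma traj_drift_ge:
  fixes \<Phi> :: "'h list \<Rightarrow> ennreal"
  assumes I0: "Inv []" and IS: "\<And>hs x. Inv hs \<Longrightarrow> x \<in> set_pmf (K hs) \<Longrightarrow> Inv (hs @ [x])"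
    and drift: "\<And>hs. Inv hs \<Longrightarrow> \<Phi> hs \<le> (\<integral>\<^sup>+x. \<Phi> (hs @ [x]) \<partial>K hs) + indicator {hs. Q hs} hs"
  shows "\<Phi> [] \<le> (\<integral>\<^sup>+hs. \<Phi> hs \<partial>traj K T) + (\<Sum>t<T. emeasure (traj K t) {hs. Q hs})"
proof (induction T)
  case (Suc T)
  have "(\<integral>\<^sup>+hs. \<Phi> hs \<partial>traj K T) \<le> (\<integral>\<^sup>+hs. \<Phi> hs \<partial>traj K (Suc T)) + emeasure (traj K T) {hs. Q hs}"
    unfolding nn_integral_traj_Suc_add
    by (rule nn_integral_mono_AE, rule AE_pmfI) (use drift traj_invariant[of Inv K, OF I0 IS] in blast)
  then have "(\<integral>\<^sup>+hs. \<Phi> hs \<partial>traj K T) + (\<Sum>t<T. emeasure (traj K t) {hs. Q hs})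
      \<le> (\<integral>\<^sup>+hs. \<Phi> hs \<partial>traj K (Suc T)) + (\<Sum>t<Suc T. emeasure (traj K t) {hs. Q hs})"
    by (simp only: sum.lessThan_Suc add.assoc[symmetric] add.commute[of _ "emeasure _ _"] add_right_mono)
  with Suc show ?case by (rule order_trans)
qed simp

lemma emeasure_traj_Suc_le:
  assumes I0: "Inv []" and IS: "\<And>hs x. Inv hs \<Longrightarrow> x \<in> set_pmf (K hs) \<Longrightarrow> Inv (hs @ [x])"
    and anti: "\<And>hs x. Inv hs \<Longrightarrow> x \<in> set_pmf (K hs) \<Longrightarrow> Q (hs @ [x]) \<Longrightarrow> Q hs"
  shows "emeasure (traj K (Suc t)) {hs. Q hs} \<le> emeasure (traj K t) {hs. Q hs}"
proof -
  have "emeasure (traj K (Suc t)) {hs. Q hs} = (\<integral>\<^sup>+hs. emeasure (K hs) {x. Q (hs @ [x])} \<partial>traj K t)"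
    by (simp add: vimage_def)
  also have "\<dots> \<le> (\<integral>\<^sup>+hs. indicator {hs. Q hs} hs \<partial>traj K t)"
  proof (rule nn_integral_mono_AE, rule AE_pmfI)
    fix hs assume "hs \<in> set_pmf (traj K t)"
    then have "Inv hs" using traj_invariant[of Inv K, OF I0 IS] by blast
    then have "\<not> Q hs \<Longrightarrow> set_pmf (K hs) \<inter> {x. Q (hs @ [x])} = {}" using anti by blast
    then show "emeasure (K hs) {x. Q (hs @ [x])} \<le> indicator {hs. Q hs} hs"
      by (cases "Q hs") (simp_all add: measure_pmf.emeasure_le_1 measure_pmf.emeasure_eq_measure
          measure_pmf_zero_iff)
  qed
  finally show ?thesis by simp
qed

lemma suminf_traj_le_potential:
  fixes \<Phi> :: "'h list \<Rightarrow> ennreal"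
  assumes "Inv []" and "\<And>hs x. Inv hs \<Longrightarrow> x \<in> set_pmf (K hs) \<Longrightarrow> Inv (hs @ [x])"
    and "\<And>hs. Inv hs \<Longrightarrow> (\<integral>\<^sup>+x. \<Phi> (hs @ [x]) \<partial>K hs) + indicator {hs. Q hs} hs \<le> \<Phi> hs"
  shows "(\<Sum>t. emeasure (traj K t) {hs. Q hs}) \<le> \<Phi> []"
proof (rule suminf_le_const)
  fix n
  have "(\<Sum>t<n. emeasure (traj K t) {hs. Q hs}) \<le> (\<integral>\<^sup>+hs. \<Phi> hs \<partial>traj K n) + (\<Sum>t<n. emeasure (traj K t) {hs. Q hs})"
    by simp
  also have "\<dots> \<le> \<Phi> []" by (rule traj_drift_le[OF assms])
  finally show "(\<Sum>t<n. emeasure (traj K t) {hs. Q hs}) \<le> \<Phi> []" .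
qed simp

text \<open>Run the drift for B rounds: what is left of a potential bounded by B is at most B times the
  probability of not yet having stopped, which is at most each of the first B terms of the sum.\<close>
lemma potential_le_twice_suminf_traj:
  fixes \<Phi> :: "'h list \<Rightarrow> ennreal"
  assumes I0: "Inv []" and IS: "\<And>hs x. Inv hs \<Longrightarrow> x \<in> set_pmf (K hs) \<Longrightarrow> Inv (hs @ [x])"
    and drift: "\<And>hs. Inv hs \<Longrightarrow> \<Phi> hs \<le> (\<integral>\<^sup>+x. \<Phi> (hs @ [x]) \<partial>K hs) + indicator {hs. Q hs} hs"
    and bound: "\<And>hs. Inv hs \<Longrightarrow> \<Phi> hs \<le> of_nat B * indicator {hs. Q hs} hs"
    and anti: "\<And>hs x. Inv hs \<Longrightarrow> x \<in> set_pmf (K hs) \<Longrightarrow> Q (hs @ [x]) \<Longrightarrow> Q hs"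
  shows "\<Phi> [] \<le> 2 * (\<Sum>t. emeasure (traj K t) {hs. Q hs})"
proof -
  let ?P = "\<lambda>t. emeasure (traj K t) {hs. Q hs}"
  have dec: "decseq ?P" by (rule decseq_SucI, rule emeasure_traj_Suc_le[OF I0 IS anti]) auto
  have "\<Phi> [] \<le> (\<integral>\<^sup>+hs. \<Phi> hs \<partial>traj K B) + (\<Sum>t<B. ?P t)"
    by (rule traj_drift_ge[OF I0 IS drift])
  also have "(\<integral>\<^sup>+hs. \<Phi> hs \<partial>traj K B) \<le> (\<integral>\<^sup>+hs. of_nat B * indicator {hs. Q hs} hs \<partial>traj K B)"
    by (rule nn_integral_mono_AE, rule AE_pmfI) (use bound traj_invariant[of Inv K, OF I0 IS] in blast)
  also have "\<dots> = (\<Sum>t<B. ?P B)" by (simp add: nn_integral_cmult_indicator)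
  also have "\<dots> \<le> (\<Sum>t<B. ?P t)" by (rule sum_mono) (use dec in \<open>auto simp: decseq_def\<close>)
  also have "(\<Sum>t<B. ?P t) + (\<Sum>t<B. ?P t) = 2 * (\<Sum>t<B. ?P t)" by (simp add: mult_2)
  also have "\<dots> \<le> 2 * (\<Sum>t. ?P t)" by (intro mult_left_mono sum_le_suminf) auto
  finally show ?thesis by (simp add: add_right_mono)
qed

definition uninformed :: "'a \<Rightarrow> 'a \<Rightarrow> 'a hist \<Rightarrow> bool" where
  "uninformed r u hs \<longleftrightarrow> (\<forall>i\<le>length hs. u \<notin> informed_at r hs i)"

lemma informed_at_snoc: "i \<le> length hs \<Longrightarrow> informed_at r (hs @ [x]) i = informed_at r hs i"
  unfolding informed_at_def by (auto simp: nth_append)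

lemma uninformed_snoc: "uninformed r u (hs @ [x]) \<Longrightarrow> uninformed r u hs"
  unfolding uninformed_def by (metis informed_at_snoc le_SucI length_append_singleton)

lemma expected_inform_time_eq_suminf:
  "expected_inform_time r K u = (\<Sum>t. emeasure (traj K t) {hs. uninformed r u hs})"
  unfolding expected_inform_time_def
proof (rule suminf_cong)
  fix t
  have "emeasure (traj K t) {hs. \<forall>i\<le>t. u \<notin> informed_at r hs i} = emeasure (traj K t) {hs. uninformed r u hs}"
    by (rule emeasure_eq_AE, rule AE_pmfI) (auto dest: length_traj simp: uninformed_def)
  then show "ennreal (measure_pmf.prob (traj K t) {hs. \<forall>i\<le>t. u \<notin> informed_at r hs i})
      = emeasure (traj K t) {hs. uninformed r u hs}"
    by (simp add: measure_pmf.emeasure_eq_measure)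
qed

lemma nn_integral_pmf_add_one_le:
  fixes \<Phi> G :: "'a \<Rightarrow> ennreal"
  assumes "\<And>x. x \<in> set_pmf K \<Longrightarrow> \<Phi> x + G x \<le> c" and "(\<integral>\<^sup>+x. G x \<partial>K) = 1"
  shows "(\<integral>\<^sup>+x. \<Phi> x \<partial>K) + 1 \<le> c"
proof -
  have "(\<integral>\<^sup>+x. \<Phi> x \<partial>K) + 1 = (\<integral>\<^sup>+x. \<Phi> x + G x \<partial>K)" using assms(2) by (simp add: nn_integral_add)
  also have "\<dots> \<le> (\<integral>\<^sup>+x. c \<partial>K)" by (rule nn_integral_mono_AE, rule AE_pmfI) (rule assms(1))
  finally show ?thesis by simp
qed

lemma le_nn_integral_pmf_add_one:
  fixes \<Phi> G :: "'a \<Rightarrow> ennreal"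
  assumes "\<And>x. x \<in> set_pmf K \<Longrightarrow> c \<le> \<Phi> x + G x" and "(\<integral>\<^sup>+x. G x \<partial>K) = 1"
  shows "c \<le> (\<integral>\<^sup>+x. \<Phi> x \<partial>K) + 1"
proof -
  have "c = (\<integral>\<^sup>+x. c \<partial>K)" by simp
  also have "\<dots> \<le> (\<integral>\<^sup>+x. \<Phi> x + G x \<partial>K)" by (rule nn_integral_mono_AE, rule AE_pmfI) (rule assms(1))
  also have "\<dots> = (\<integral>\<^sup>+x. \<Phi> x \<partial>K) + 1" using assms(2) by (simp add: nn_integral_add)
  finally show ?thesis .
qed

lemma nn_integral_of_nat_indicator_eq_one:
  assumes "emeasure (measure_pmf K) A = ennreal (1 / real d)" and "0 < d"
  shows "(\<integral>\<^sup>+x. of_nat d * indicator A x \<partial>K) = 1"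
proof -
  have "(\<integral>\<^sup>+x. of_nat d * indicator A x \<partial>K) = ennreal (real d) * ennreal (1 / real d)"
    using assms(1) by (simp add: nn_integral_cmult_indicator ennreal_of_nat_eq_real_of_nat)
  also have "\<dots> = 1" using assms(2) by (simp flip: ennreal_mult)
  finally show ?thesis .
qed

text \<open>The integral is P(A) + P(\<not>A): as A does not depend on coordinate a, the second summand
  contributes P(\<not>A) \<cdot> d \<cdot> P(c a = b).\<close>
lemma nn_integral_Pi_pmf_event_or_coordinate:
  fixes p :: "'a \<Rightarrow> 'b pmf"
  assumes fin: "finite B" and aB: "a \<notin> B" and indep: "\<And>g y. A (g(a := y)) = A g" and d: "0 < d"
    and pb: "emeasure (p a) {b} = ennreal (1 / real d)"
  shows "(\<integral>\<^sup>+c. indicator {c. A c} c + of_nat d * indicator {c. \<not> A c \<and> c a = b} c \<partial>Pi_pmf (insert a B) dflt p) = 1"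
proof -
  let ?Q = "Pi_pmf B dflt p"
  let ?al = "emeasure ?Q {g. A g}" and ?be = "emeasure ?Q {g. \<not> A g}"
  have one: "?al + ?be = 1"
    by (subst plus_emeasure) (auto simp: measure_pmf.emeasure_space_1 Un_def simp flip: space_measure_pmf)
  have inner: "(\<integral>\<^sup>+g. indicator {c. A c} (g(a := y)) + of_nat d * indicator {c. \<not> A c \<and> c a = b} (g(a := y)) \<partial>?Q)
        = ?al + (of_nat d * indicator {b} y) * ?be" for y
  proof -
    have "(\<integral>\<^sup>+g. indicator {c. A c} (g(a := y)) + of_nat d * indicator {c. \<not> A c \<and> c a = b} (g(a := y)) \<partial>?Q)
        = (\<integral>\<^sup>+g. indicator {g. A g} g + (of_nat d * indicator {b} y) * indicator {g. \<not> A g} g \<partial>?Q)"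
      by (rule nn_integral_cong) (simp add: indep indicator_def)
    then show ?thesis by (simp add: nn_integral_add nn_integral_cmult_indicator)
  qed
  have "(\<integral>\<^sup>+c. indicator {c. A c} c + of_nat d * indicator {c. \<not> A c \<and> c a = b} c \<partial>Pi_pmf (insert a B) dflt p)
     = (\<integral>\<^sup>+y. ?al + ?be * (of_nat d * indicator {b} y) \<partial>p a)"
    unfolding Pi_pmf_insert[OF fin aB] by (simp add: nn_integral_pair_pmf' case_prod_beta inner ac_simps)
  also have "\<dots> = ?al + ?be * (\<integral>\<^sup>+y. of_nat d * indicator {b} y \<partial>p a)"
    by (simp add: nn_integral_add nn_integral_cmult)
  also have "(\<integral>\<^sup>+y. of_nat d * indicator {b} y \<partial>p a) = 1"
    by (rule nn_integral_of_nat_indicator_eq_one[OF pb d])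
  finally show ?thesis using one by simp
qed

lemma ennreal_half_le: "(of_nat m :: ennreal) \<le> 2 * e \<Longrightarrow> ennreal (1/2 * real m) \<le> e"
proof -
  assume le: "(of_nat m :: ennreal) \<le> 2 * e"
  have "ennreal (1/2 * real m) = ennreal (1/2) * of_nat m"
    by (subst ennreal_mult) (auto simp: ennreal_of_nat_eq_real_of_nat)
  also have "\<dots> \<le> ennreal (1/2) * (2 * e)" using le by (rule mult_left_mono) simp
  also have "\<dots> = ennreal (1/2 * 2) * e" by (simp only: ennreal_mult mult.assoc) simp
  finally show ?thesis by simp
qed

lemma tree_path_unique:
  assumes edge_sym: "\<And>x y. E x y \<Longrightarrow> E y x" and acyclic: "\<not> (\<exists>xs. is_cycle E xs)"
  shows "is_path E xs \<Longrightarrow> is_path E ys \<Longrightarrow> hd xs = hd ys \<Longrightarrow> last xs = last ys \<Longrightarrow> xs = ys"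
proof (induction xs arbitrary: ys)
  case Nil
  then show ?case by (simp add: is_path_def)
next
  case (Cons a xs)
  show ?case
  proof (cases xs)
    case Nil
    with Cons.prems have "hd ys = last ys" "distinct ys" "ys \<noteq> []" by (auto simp: is_path_def)
    then show ?thesis using Cons.prems Nil by (cases ys) (auto split: if_splits)
  next
    case xs: (Cons x xs')
    from Cons.prems(1) xs have dx: "distinct (a # x # xs')" and sx: "successively E (a # x # xs')"
      by (auto simp: is_path_def)
    obtain ys0 where ys0: "ys = a # ys0" using Cons.prems(2,3) by (cases ys) (auto simp: is_path_def)
    show ?thesis
    proof (cases ys0)
      case Nil
      with ys0 Cons.prems(4) xs have "last (x # xs') = a" by simp
      then have "a \<in> set (x # xs')" using last_in_set[of "x # xs'"] by simp
      with dx show ?thesis by simp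
    next
      case ys0c: (Cons y ys')
      from Cons.prems(2) ys0 ys0c have dy: "distinct (a # y # ys')" and sy: "successively E (a # y # ys')"
        by (auto simp: is_path_def)
      consider "x = y" | "x \<noteq> y" "x \<in> set ys'" | "x \<notin> set (a # y # ys')" using dx by auto
      then show ?thesis
      proof cases
        case 1
        have "x # xs' = y # ys'"
          using Cons.IH[of "y # ys'"] Cons.prems(4) dx sx dy sy 1 xs ys0 ys0c by (simp add: is_path_def)
        then show ?thesis using xs ys0 ys0c by simp
      next
        case 2
        then obtain zs1 zs2 where sp: "ys' = zs1 @ x # zs2" by (meson split_list)
        have "successively E ((a # y # zs1 @ [x]) @ zs2)" using sy sp by simp
        then have "successively E (a # y # zs1 @ [x])" by (simp only: successively_append_iff)
        then have "is_cycle E (a # y # zs1 @ [x])"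
          using dy sp sx edge_sym unfolding is_cycle_def by auto
        with acyclic show ?thesis by blast
      next
        case 3
        have "x # xs' = x # ys"
          using Cons.IH[of "x # ys"] Cons.prems(4) dx sx dy sy 3 edge_sym xs ys0 ys0c by (simp add: is_path_def)
        then have "a \<in> set xs'" using ys0 by simp
        with dx show ?thesis by simp
      qed
    qed
  qed
qed

lemma is_path_snoc: "is_path E ys \<Longrightarrow> v \<notin> set ys \<Longrightarrow> E (last ys) v \<Longrightarrow> is_path E (ys @ [v])"
  unfolding is_path_def by (simp add: successively_append_iff)

lemma current_snoc: "current r (hs @ [x]) = snd x"
  unfolding current_def informed_at_def by simp

lemma current_Nil: "current r [] = {r}"
  unfolding current_def informed_at_def by simp

locale rumor_tree =
  fixes V :: "nat set" and E :: "nat \<Rightarrow> nat \<Rightarrow> bool" and r u :: nat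
  assumes tree: "is_tree V E" and root_in_V: "r \<in> V" and target_in_V: "u \<in> V"
    and target_ne_root: "u \<noteq> r"
begin

lemma edge_sym: "E x y \<Longrightarrow> E y x"
  using tree by (simp add: is_tree_def simple_graph_def)

lemma edge_in_V: "E x y \<Longrightarrow> x \<in> V \<and> y \<in> V"
  using tree by (simp add: is_tree_def simple_graph_def)

lemma finite_V: "finite V"
  using tree by (simp add: is_tree_def simple_graph_def)

lemma connected: "x \<in> V \<Longrightarrow> y \<in> V \<Longrightarrow> \<exists>xs. is_path E xs \<and> hd xs = x \<and> last xs = y"
  using tree by (simp add: is_tree_def connected_graph_def)

lemma path_unique: "is_path E xs \<Longrightarrow> is_path E ys \<Longrightarrow> hd xs = hd ys \<Longrightarrow> last xs = last ys \<Longrightarrow> xs = ys"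
  by (rule tree_path_unique[OF edge_sym]) (use tree in \<open>simp_all add: is_tree_def\<close>)

lemma nbrs_subset: "nbrs E v \<subseteq> V"
  using edge_in_V by (auto simp: nbrs_def)

lemma finite_nbrs: "finite (nbrs E v)"
  using nbrs_subset finite_V by (rule finite_subset)

lemma path_second_node:
  assumes "is_path E xs" "hd xs \<noteq> last xs" shows "E (xs!0) (xs!1) \<and> 1 < length xs"
proof -
  obtain y ys where xs: "xs = y # ys" using assms(1) by (cases xs) (auto simp: is_path_def)
  then obtain z zs where "ys = z # zs" using assms(2) by (cases ys) auto
  with xs assms(1) show ?thesis by (auto simp: is_path_def)
qed

lemma nbrs_nonempty: assumes "v \<in> V" shows "nbrs E v \<noteq> {}"
proof -
  obtain w where w: "w \<in> V" "w \<noteq> v" using root_in_V target_in_V target_ne_root by blast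
  obtain xs where xs: "is_path E xs" "hd xs = v" "last xs = w" using connected[OF assms w(1)] by blast
  have "E (xs!0) (xs!1)" "xs \<noteq> []" using path_second_node[OF xs(1)] xs w(2) by (auto simp: is_path_def)
  then have "E v (xs!1)" using xs(2) by (simp add: hd_conv_nth)
  then show ?thesis by (auto simp: nbrs_def)
qed

lemma deg_pos: "v \<in> V \<Longrightarrow> 0 < deg E v"
  using nbrs_nonempty finite_nbrs by (simp add: deg_def card_gt_0_iff)

definition P :: "nat list" where "P = (THE xs. is_path E xs \<and> hd xs = r \<and> last xs = u)"

lemma P_path: "is_path E P" "hd P = r" "last P = u"
proof -
  obtain xs where xs: "is_path E xs" "hd xs = r" "last xs = u"
    using connected[OF root_in_V target_in_V] by blast
  have "\<exists>!xs. is_path E xs \<and> hd xs = r \<and> last xs = u"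
  proof (rule ex1I[of _ xs])
    show "is_path E xs \<and> hd xs = r \<and> last xs = u" using xs by simp
    fix ys assume "is_path E ys \<and> hd ys = r \<and> last ys = u"
    then show "ys = xs" using path_unique[of ys xs] xs by simp
  qed
  from theI'[OF this] show "is_path E P" "hd P = r" "last P = u" unfolding P_def by simp_all
qed

definition k :: nat where "k = length P - 1"

lemma length_P: "length P = Suc k"
  using path_second_node[OF P_path(1)] P_path(2,3) target_ne_root by (auto simp: k_def)

lemma P_0: "P!0 = r"
  using P_path(2) length_P by (cases P) auto

lemma P_k: "P!k = u"
proof -
  have "P \<noteq> []" using length_P by auto
  then show ?thesis using P_path(3) last_conv_nth[of P] length_P by simp
qed

lemma P_nth_eq_iff: "i \<le> k \<Longrightarrow> j \<le> k \<Longrightarrow> P!i = P!j \<longleftrightarrow> i = j"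
  using P_path(1) length_P by (simp add: is_path_def nth_eq_iff_index_eq)

lemma P_edge: "1 \<le> i \<Longrightarrow> i \<le> k \<Longrightarrow> E (P!(i - 1)) (P!i)"
  using P_path(1) length_P successively_nth[of E P "i - 1"] by (simp add: is_path_def)

lemma P_in_V: "i \<le> k \<Longrightarrow> P!i \<in> V"
  using P_edge[of i] P_0 root_in_V edge_in_V by (cases "i = 0") simp_all

lemma take_P: assumes "i \<le> k"
  shows "is_path E (take (Suc i) P) \<and> hd (take (Suc i) P) = r \<and> last (take (Suc i) P) = P!i"
proof -
  have "successively E (take (Suc i) P @ drop (Suc i) P)" using P_path(1) by (simp add: is_path_def)
  then have "successively E (take (Suc i) P)" by (simp only: successively_append_iff)
  moreover have ne: "take (Suc i) P \<noteq> []" and "Suc i \<le> length P" using assms length_P by auto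
  moreover have "distinct (take (Suc i) P)" using P_path(1) by (simp add: is_path_def)
  moreover have "hd (take (Suc i) P) = r" using ne P_0 by (simp add: hd_conv_nth)
  moreover have "last (take (Suc i) P) = P!i" using ne \<open>Suc i \<le> length P\<close> by (simp add: last_conv_nth)
  ultimately show ?thesis by (simp add: is_path_def)
qed

definition rooted_subtree :: "nat set \<Rightarrow> bool" where
  "rooted_subtree S \<longleftrightarrow> S \<subseteq> V \<and> r \<in> S
     \<and> (\<forall>v\<in>S. \<exists>ys. is_path E ys \<and> hd ys = r \<and> last ys = v \<and> set ys \<subseteq> S)"

lemma rooted_subtree_root: "rooted_subtree {r}"
  unfolding rooted_subtree_def using root_in_V by (auto intro!: exI[of _ "[r]"] simp: is_path_def)

lemma rooted_subtree_extend:
  assumes "rooted_subtree S" "S \<subseteq> S'" "\<And>w. w \<in> S' \<Longrightarrow> w \<notin> S \<Longrightarrow> \<exists>x\<in>S. E w x"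
  shows "rooted_subtree S'"
  unfolding rooted_subtree_def
proof (intro conjI ballI)
  show "r \<in> S'" "S' \<subseteq> V" using assms edge_in_V unfolding rooted_subtree_def by blast+
  fix v assume v: "v \<in> S'"
  show "\<exists>ys. is_path E ys \<and> hd ys = r \<and> last ys = v \<and> set ys \<subseteq> S'"
  proof (cases "v \<in> S")
    case True then show ?thesis using assms(1,2) unfolding rooted_subtree_def by blast
  next
    case False
    then obtain x where x: "x \<in> S" "E v x" using assms(3) v by blast
    obtain ys where ys: "is_path E ys" "hd ys = r" "last ys = x" "set ys \<subseteq> S"
      using assms(1) x(1) unfolding rooted_subtree_def by blast
    have "is_path E (ys @ [v])" using ys False edge_sym[OF x(2)] by (intro is_path_snoc) auto
    moreover have "hd (ys @ [v]) = r" using ys by (simp add: is_path_def)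
    moreover have "set (ys @ [v]) \<subseteq> S'" using ys(4) v assms(2) by auto
    ultimately show ?thesis by (intro exI[of _ "ys @ [v]"]) simp
  qed
qed

lemma rooted_subtree_path_prefix:
  assumes "rooted_subtree S" "i \<le> k" "P!i \<in> S" "l \<le> i" shows "P!l \<in> S"
proof -
  obtain ys where ys: "is_path E ys" "hd ys = r" "last ys = P!i" "set ys \<subseteq> S"
    using assms(1,3) unfolding rooted_subtree_def by blast
  have "ys = take (Suc i) P" using path_unique[of ys "take (Suc i) P"] take_P[OF assms(2)] ys(1-3) by simp
  moreover have "l < length (take (Suc i) P)" using assms length_P by simp
  then have "take (Suc i) P ! l \<in> set (take (Suc i) P)" by (rule nth_mem)
  then have "P!l \<in> set (take (Suc i) P)" using assms by simp
  ultimately show ?thesis using ys(4) by auto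
qed

lemma rooted_subtree_path_nbr:
  assumes "rooted_subtree S" "1 \<le> i" "i \<le> k" "P!i \<notin> S" "x \<in> S" "E (P!i) x"
  shows "x = P!(i - 1)"
proof -
  obtain ys where ys: "is_path E ys" "hd ys = r" "last ys = x" "set ys \<subseteq> S"
    using assms(1,5) unfolding rooted_subtree_def by blast
  have "is_path E (ys @ [P!i])" using ys assms(4) edge_sym[OF assms(6)] by (intro is_path_snoc) auto
  moreover have "hd (ys @ [P!i]) = r" using ys by (simp add: is_path_def)
  ultimately have "ys @ [P!i] = take (Suc i) P" using path_unique[of "ys @ [P!i]" "take (Suc i) P"] take_P[OF assms(3)] by simp
  also have "\<dots> = take i P @ [P!i]" using assms(3) length_P by (simp add: take_Suc_conv_app_nth)
  finally have "x = last (take i P)" using ys by simp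
  moreover have "take i P \<noteq> []" using assms(2,3) length_P by (cases P) auto
  ultimately show ?thesis using assms(2,3) length_P by (simp add: last_conv_nth)
qed

definition hist_inv :: "nat hist \<Rightarrow> bool" where
  "hist_inv hs \<longleftrightarrow> rooted_subtree (current r hs) \<and> (\<forall>i\<le>length hs. informed_at r hs i \<subseteq> current r hs)"

text \<open>The common shape of Pull and both variants of RPull.\<close>
definition request_kernel :: "(nat hist \<Rightarrow> ((nat \<Rightarrow> nat) \<times> nat set) pmf) \<Rightarrow> bool" where
  "request_kernel K \<longleftrightarrow> (\<forall>hs. rooted_subtree (current r hs) \<longrightarrow>
     map_pmf fst (K hs) = requests V E (current r hs) \<and>
     (\<forall>x\<in>set_pmf (K hs). current r hs \<subseteq> snd x \<and>
        snd x \<subseteq> current r hs \<union> {w \<in> V - current r hs. fst x w \<in> current r hs}))"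

lemma hist_inv_Nil: "hist_inv []"
  by (simp add: hist_inv_def current_Nil rooted_subtree_root informed_at_def)

lemma uninformed_iff: "hist_inv hs \<Longrightarrow> uninformed r u hs \<longleftrightarrow> u \<notin> current r hs"
  unfolding hist_inv_def uninformed_def current_def by blast

lemma requests_nbrs: assumes "c \<in> set_pmf (requests V E S)" "w \<in> V - S" shows "c w \<in> nbrs E w"
proof -
  have "c \<in> PiE_dflt (V - S) undefined (set_pmf \<circ> (\<lambda>w. pmf_of_set (nbrs E w)))"
    using assms(1) finite_V unfolding requests_def by (simp add: set_Pi_pmf)
  then have "c w \<in> set_pmf (pmf_of_set (nbrs E w))" using assms(2) by (simp add: PiE_dflt_def)
  then show ?thesis using nbrs_nonempty[of w] finite_nbrs[of w] assms(2) by simp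
qed

lemma emeasure_pmf_of_nbrs: assumes "b \<in> nbrs E a"
  shows "emeasure (measure_pmf (pmf_of_set (nbrs E a))) {b} = ennreal (1 / real (deg E a))"
proof -
  have "emeasure (measure_pmf (pmf_of_set (nbrs E a))) {b}
      = ennreal (real (card (nbrs E a \<inter> {b})) / real (card (nbrs E a)))"
    using assms finite_nbrs[of a] by (subst emeasure_pmf_of_set) auto
  also have "nbrs E a \<inter> {b} = {b}" using assms by auto
  finally show ?thesis by (simp add: deg_def)
qed

lemma emeasure_requests_component: assumes "a \<in> V - S" "b \<in> nbrs E a"
  shows "emeasure (requests V E S) {c. c a = b} = ennreal (1 / real (deg E a))"
proof -
  have "map_pmf (\<lambda>c. c a) (requests V E S) = pmf_of_set (nbrs E a)"
    unfolding requests_def using Pi_pmf_component[of "V - S" a undefined] finite_V assms(1) by simp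
  moreover have "emeasure (requests V E S) {c. c a = b} = emeasure (map_pmf (\<lambda>c. c a) (requests V E S)) {b}"
    by (simp add: vimage_def)
  ultimately have "emeasure (requests V E S) {c. c a = b} = emeasure (measure_pmf (pmf_of_set (nbrs E a))) {b}"
    by simp
  then show ?thesis using emeasure_pmf_of_nbrs[OF assms(2)] by simp
qed

lemma request_kernel_requests:
  assumes "request_kernel K" "rooted_subtree (current r hs)" "x \<in> set_pmf (K hs)"
  shows "fst x \<in> set_pmf (requests V E (current r hs))"
proof -
  have "fst x \<in> set_pmf (map_pmf fst (K hs))" using assms(3) by simp
  then show ?thesis using assms(1,2) unfolding request_kernel_def by simp
qed

lemma request_kernel_step:
  assumes "request_kernel K" "rooted_subtree (current r hs)" "x \<in> set_pmf (K hs)"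
  shows "current r hs \<subseteq> snd x" and "rooted_subtree (snd x)"
proof -
  let ?S = "current r hs"
  have sub2: "snd x \<subseteq> ?S \<union> {w \<in> V - ?S. fst x w \<in> ?S}"
    using assms unfolding request_kernel_def by blast
  show sub: "?S \<subseteq> snd x" using assms unfolding request_kernel_def by blast
  show "rooted_subtree (snd x)"
  proof (rule rooted_subtree_extend[OF assms(2) sub])
    fix w assume "w \<in> snd x" "w \<notin> ?S"
    then have w: "w \<in> V - ?S" "fst x w \<in> ?S" using sub2 by auto
    then show "\<exists>y\<in>?S. E w y"
      using requests_nbrs[OF request_kernel_requests[OF assms] w(1)] by (auto simp: nbrs_def)
  qed
qed

lemma hist_inv_snoc:
  assumes "request_kernel K" "hist_inv hs" "x \<in> set_pmf (K hs)" shows "hist_inv (hs @ [x])"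
proof -
  have S: "rooted_subtree (current r hs)" using assms(2) by (simp add: hist_inv_def)
  have "informed_at r (hs @ [x]) i \<subseteq> snd x" if "i \<le> length (hs @ [x])" for i
  proof (cases "i \<le> length hs")
    case True
    then show ?thesis using assms(2) request_kernel_step(1)[OF assms(1) S assms(3)]
      by (auto simp: informed_at_snoc hist_inv_def)
  next
    case False
    then have "i = Suc (length hs)" using that by simp
    then show ?thesis by (simp add: informed_at_def)
  qed
  then show ?thesis
    using request_kernel_step(2)[OF assms(1) S assms(3)] by (simp add: hist_inv_def current_snoc)
qed

subsection \<open>Drift of potentials on informed sets\<close>

lemma drift_le_round:
  fixes \<Phi> :: "nat set \<Rightarrow> ennreal" and G :: "nat set \<Rightarrow> (nat \<Rightarrow> nat) \<Rightarrow> ennreal"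
  assumes K: "request_kernel K" and inv: "hist_inv hs"
    and informed: "\<And>S. rooted_subtree S \<Longrightarrow> u \<in> S \<Longrightarrow> \<Phi> S = 0"
    and gain: "\<And>S. rooted_subtree S \<Longrightarrow> u \<notin> S \<Longrightarrow> (\<integral>\<^sup>+c. G S c \<partial>requests V E S) = 1"
    and drop: "\<And>x. u \<notin> current r hs \<Longrightarrow> x \<in> set_pmf (K hs) \<Longrightarrow>
                 \<Phi> (snd x) + G (current r hs) (fst x) \<le> \<Phi> (current r hs)"
  shows "(\<integral>\<^sup>+x. \<Phi> (current r (hs @ [x])) \<partial>K hs) + indicator {hs. uninformed r u hs} hs \<le> \<Phi> (current r hs)"
proof -
  let ?S = "current r hs"
  have S: "rooted_subtree ?S" using inv by (simp add: hist_inv_def)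
  show ?thesis
  proof (cases "u \<in> ?S")
    case True
    have "\<Phi> (current r (hs @ [x])) = 0" if x: "x \<in> set_pmf (K hs)" for x
      using True request_kernel_step[OF K S x] informed[of "snd x"] by (auto simp: current_snoc)
    then have "(\<integral>\<^sup>+x. \<Phi> (current r (hs @ [x])) \<partial>K hs) = (\<integral>\<^sup>+x. 0 \<partial>K hs)"
      by (intro nn_integral_cong_AE AE_pmfI) simp
    then show ?thesis using True uninformed_iff[OF inv] by simp
  next
    case False
    have "(\<integral>\<^sup>+x. G ?S (fst x) \<partial>K hs) = (\<integral>\<^sup>+c. G ?S c \<partial>map_pmf fst (K hs))" by simp
    also have "\<dots> = 1" using K S gain[OF S False] unfolding request_kernel_def by simp
    finally have "(\<integral>\<^sup>+x. \<Phi> (current r (hs @ [x])) \<partial>K hs) + 1 \<le> \<Phi> ?S"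
      using drop[OF False] by (intro nn_integral_pmf_add_one_le) (auto simp: current_snoc)
    then show ?thesis using False uninformed_iff[OF inv] by simp
  qed
qed

lemma drift_ge_round:
  fixes \<Phi> :: "nat set \<Rightarrow> ennreal" and G :: "nat set \<Rightarrow> (nat \<Rightarrow> nat) \<Rightarrow> ennreal"
  assumes K: "request_kernel K" and inv: "hist_inv hs"
    and informed: "\<And>S. rooted_subtree S \<Longrightarrow> u \<in> S \<Longrightarrow> \<Phi> S = 0"
    and gain: "\<And>S. rooted_subtree S \<Longrightarrow> u \<notin> S \<Longrightarrow> (\<integral>\<^sup>+c. G S c \<partial>requests V E S) = 1"
    and drop: "\<And>x. u \<notin> current r hs \<Longrightarrow> x \<in> set_pmf (K hs) \<Longrightarrow>
                 \<Phi> (current r hs) \<le> \<Phi> (snd x) + G (current r hs) (fst x)"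
  shows "\<Phi> (current r hs) \<le> (\<integral>\<^sup>+x. \<Phi> (current r (hs @ [x])) \<partial>K hs) + indicator {hs. uninformed r u hs} hs"
proof -
  let ?S = "current r hs"
  have S: "rooted_subtree ?S" using inv by (simp add: hist_inv_def)
  show ?thesis
  proof (cases "u \<in> ?S")
    case True
    then show ?thesis using informed[OF S] by simp
  next
    case False
    have "(\<integral>\<^sup>+x. G ?S (fst x) \<partial>K hs) = (\<integral>\<^sup>+c. G ?S c \<partial>map_pmf fst (K hs))" by simp
    also have "\<dots> = 1" using K S gain[OF S False] unfolding request_kernel_def by simp
    finally have "\<Phi> ?S \<le> (\<integral>\<^sup>+x. \<Phi> (current r (hs @ [x])) \<partial>K hs) + 1"
      using drop[OF False] by (intro le_nn_integral_pmf_add_one) (auto simp: current_snoc)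
    then show ?thesis using False uninformed_iff[OF inv] by simp
  qed
qed

lemma expected_inform_time_le_potential:
  fixes \<Phi> :: "nat set \<Rightarrow> ennreal" and G :: "nat set \<Rightarrow> (nat \<Rightarrow> nat) \<Rightarrow> ennreal"
  assumes K: "request_kernel K"
    and informed: "\<And>S. rooted_subtree S \<Longrightarrow> u \<in> S \<Longrightarrow> \<Phi> S = 0"
    and gain: "\<And>S. rooted_subtree S \<Longrightarrow> u \<notin> S \<Longrightarrow> (\<integral>\<^sup>+c. G S c \<partial>requests V E S) = 1"
    and drop: "\<And>hs x. hist_inv hs \<Longrightarrow> u \<notin> current r hs \<Longrightarrow> x \<in> set_pmf (K hs) \<Longrightarrow>
                 \<Phi> (snd x) + G (current r hs) (fst x) \<le> \<Phi> (current r hs)"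
  shows "expected_inform_time r K u \<le> \<Phi> {r}"
  unfolding expected_inform_time_eq_suminf
  using suminf_traj_le_potential[of hist_inv K "\<lambda>hs. \<Phi> (current r hs)"]
    hist_inv_Nil hist_inv_snoc[OF K] drift_le_round[OF K _ informed gain drop]
  by (simp add: current_Nil)

lemma potential_le_expected_inform_time:
  fixes \<Phi> :: "nat set \<Rightarrow> ennreal" and G :: "nat set \<Rightarrow> (nat \<Rightarrow> nat) \<Rightarrow> ennreal"
  assumes K: "request_kernel K"
    and informed: "\<And>S. rooted_subtree S \<Longrightarrow> u \<in> S \<Longrightarrow> \<Phi> S = 0"
    and gain: "\<And>S. rooted_subtree S \<Longrightarrow> u \<notin> S \<Longrightarrow> (\<integral>\<^sup>+c. G S c \<partial>requests V E S) = 1"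
    and drop: "\<And>hs x. hist_inv hs \<Longrightarrow> u \<notin> current r hs \<Longrightarrow> x \<in> set_pmf (K hs) \<Longrightarrow>
                 \<Phi> (current r hs) \<le> \<Phi> (snd x) + G (current r hs) (fst x)"
    and bound: "\<And>S. rooted_subtree S \<Longrightarrow> \<Phi> S \<le> of_nat B"
  shows "\<Phi> {r} \<le> 2 * expected_inform_time r K u"
proof -
  have "(\<lambda>hs. \<Phi> (current r hs)) [] \<le> 2 * (\<Sum>t. emeasure (traj K t) {hs. uninformed r u hs})"
  proof (rule potential_le_twice_suminf_traj[where Inv = hist_inv and B = B])
    fix hs assume inv: "hist_inv hs"
    then show "\<Phi> (current r hs) \<le> of_nat B * indicator {hs. uninformed r u hs} hs"
      using bound informed uninformed_iff[OF inv] by (cases "u \<in> current r hs") (auto simp: hist_inv_def)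
    show "\<Phi> (current r hs) \<le> (\<integral>\<^sup>+x. \<Phi> (current r (hs @ [x])) \<partial>K hs) + indicator {hs. uninformed r u hs} hs"
      by (rule drift_ge_round[OF K inv informed gain drop[OF inv]])
  qed (use hist_inv_Nil hist_inv_snoc[OF K] uninformed_snoc in auto)
  then show ?thesis by (simp add: expected_inform_time_eq_suminf current_Nil)
qed


subsection \<open>The frontier of the path and the path potential\<close>

definition frontier :: "nat set \<Rightarrow> nat" where
  "frontier S = (LEAST i. P!i \<notin> S)"

lemma frontier_spec:
  assumes "rooted_subtree S" "u \<notin> S"
  shows "1 \<le> frontier S" "frontier S \<le> k" "P!frontier S \<notin> S"
    and "\<And>l. l < frontier S \<Longrightarrow> P!l \<in> S" and "\<And>l. frontier S \<le> l \<Longrightarrow> l \<le> k \<Longrightarrow> P!l \<notin> S"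
proof -
  have ex: "P!k \<notin> S" using assms(2) P_k by simp
  show notin: "P!frontier S \<notin> S" unfolding frontier_def using ex by (rule LeastI)
  show "frontier S \<le> k" unfolding frontier_def using ex by (rule Least_le)
  show "\<And>l. l < frontier S \<Longrightarrow> P!l \<in> S" unfolding frontier_def using not_less_Least by blast
  show "\<And>l. frontier S \<le> l \<Longrightarrow> l \<le> k \<Longrightarrow> P!l \<notin> S"
    using rooted_subtree_path_prefix[OF assms(1)] notin by blast
  have "r \<in> S" using assms(1) by (simp add: rooted_subtree_def)
  then show "1 \<le> frontier S" using notin P_0 by (cases "frontier S") auto
qed

lemma frontier_edge:
  assumes "rooted_subtree S" "u \<notin> S"
  shows "P!frontier S \<in> V - S" "P!(frontier S - 1) \<in> S" "P!(frontier S - 1) \<in> nbrs E (P!frontier S)"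
  using frontier_spec[OF assms] P_in_V P_edge[of "frontier S"] edge_sym by (auto simp: nbrs_def)

lemma newly_informed_path_node:
  assumes S: "rooted_subtree S" and "u \<notin> S" and S': "S' \<subseteq> S \<union> {w \<in> V - S. c w \<in> S}"
    and c: "\<And>w. w \<in> V - S \<Longrightarrow> c w \<in> nbrs E w"
    and i: "i \<le> k" "P!i \<in> S'" "P!i \<notin> S"
  shows "i = frontier S \<and> c (P!i) = P!(i - 1)"
proof -
  have "1 \<le> i" using i(3) P_0 S by (cases i) (auto simp: rooted_subtree_def)
  moreover from i S' have w: "P!i \<in> V - S" "c (P!i) \<in> S" by auto
  moreover have "E (P!i) (c (P!i))" using c[OF w(1)] by (simp add: nbrs_def)
  ultimately have parent: "c (P!i) = P!(i - 1)" using rooted_subtree_path_nbr[OF S _ i(1) i(3)] by blast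
  have "\<not> i < frontier S" using frontier_spec(4)[OF S assms(2)] i(3) by auto
  moreover have "i - 1 \<le> k" using i(1) by simp
  then have "\<not> frontier S \<le> i - 1" using frontier_spec(5)[OF S assms(2)] parent w(2) by auto
  ultimately show ?thesis using parent by auto
qed

definition path_potential :: "nat set \<Rightarrow> nat" where
  "path_potential S = (\<Sum>i | 1 \<le> i \<and> i \<le> k \<and> P!i \<notin> S. deg E (P!i))"

lemma finite_path_indices: "finite {i. 1 \<le> i \<and> i \<le> k \<and> P!i \<notin> S}"
  by (rule finite_subset[of _ "{1..k}"]) auto

lemma path_potential_antimono: "S \<subseteq> S' \<Longrightarrow> path_potential S' \<le> path_potential S"
  unfolding path_potential_def by (intro sum_mono2[OF finite_path_indices]) auto

lemma path_potential_informed: "rooted_subtree S \<Longrightarrow> u \<in> S \<Longrightarrow> path_potential S = 0"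
  using rooted_subtree_path_prefix[of S k] P_k by (auto simp: path_potential_def)

lemma path_degree_sum_eq: "path_degree_sum E r u = deg E r + path_potential {r}"
proof -
  have "path_nodes E r u = (\<lambda>i. P!i) ` {0..k}"
    using length_P by (auto simp: path_nodes_def P_def[symmetric] set_conv_nth)
  moreover have "inj_on (\<lambda>i. P!i) {0..k}" using P_nth_eq_iff by (auto simp: inj_on_def)
  ultimately have "path_degree_sum E r u = (\<Sum>i\<in>{0..k}. deg E (P!i))"
    by (simp add: path_degree_sum_def sum.reindex)
  also have "\<dots> = deg E r + (\<Sum>i\<in>{1..k}. deg E (P!i))"
    using P_0 by (simp add: sum.atLeast_Suc_atMost)
  also have "{1..k} = {i. 1 \<le> i \<and> i \<le> k \<and> P!i \<notin> {r}}"
    using P_nth_eq_iff[of _ 0] P_0 by fastforce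
  finally show ?thesis by (simp add: path_potential_def)
qed

lemma path_potential_le_root: "rooted_subtree S \<Longrightarrow> path_potential S \<le> path_potential {r}"
  by (rule path_potential_antimono) (simp add: rooted_subtree_def)

lemma path_potential_frontier_informed:
  assumes "rooted_subtree S" "u \<notin> S" "S \<subseteq> S'" "P!frontier S \<in> S'"
  shows "path_potential S' + deg E (P!frontier S) \<le> path_potential S"
proof -
  let ?A = "\<lambda>S. {i. 1 \<le> i \<and> i \<le> k \<and> P!i \<notin> S}"
  have q: "frontier S \<in> ?A S" using frontier_spec[OF assms(1,2)] by simp
  have "path_potential S' \<le> (\<Sum>i\<in>?A S - {frontier S}. deg E (P!i))"
    unfolding path_potential_def using assms(3,4) by (intro sum_mono2) (auto simp: finite_path_indices)
  moreover have "path_potential S = deg E (P!frontier S) + (\<Sum>i\<in>?A S - {frontier S}. deg E (P!i))"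
    unfolding path_potential_def using sum.remove[OF finite_path_indices q] by simp
  ultimately show ?thesis by simp
qed

lemma path_potential_round_ge:
  assumes S: "rooted_subtree S" and uS: "u \<notin> S" and "S \<subseteq> S'"
    and S': "S' \<subseteq> S \<union> {w \<in> V - S. c w \<in> S}" and c: "\<And>w. w \<in> V - S \<Longrightarrow> c w \<in> nbrs E w"
  shows "path_potential S \<le> path_potential S'
           + (if c (P!frontier S) = P!(frontier S - 1) then deg E (P!frontier S) else 0)"
proof -
  let ?A = "\<lambda>S. {i. 1 \<le> i \<and> i \<le> k \<and> P!i \<notin> S}"
  let ?B = "if c (P!frontier S) = P!(frontier S - 1) then {frontier S} else {}"
  have "?A S \<subseteq> ?A S' \<union> ?B"
    using newly_informed_path_node[OF S uS S' c] by auto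
  then have "path_potential S \<le> (\<Sum>i\<in>?A S' \<union> ?B. deg E (P!i))"
    unfolding path_potential_def by (intro sum_mono2) (auto simp: finite_path_indices)
  also have "\<dots> \<le> path_potential S' + (\<Sum>i\<in>?B. deg E (P!i))"
    unfolding path_potential_def by (simp add: sum_Un_nat finite_path_indices)
  finally show ?thesis by (simp split: if_splits)
qed

definition frontier_gain :: "nat set \<Rightarrow> (nat \<Rightarrow> nat) \<Rightarrow> ennreal" where
  "frontier_gain S c = of_nat (deg E (P!frontier S)) * indicator {c. c (P!frontier S) = P!(frontier S - 1)} c"

lemma nn_integral_frontier_gain:
  assumes "rooted_subtree S" "u \<notin> S" shows "(\<integral>\<^sup>+c. frontier_gain S c \<partial>requests V E S) = 1"
  unfolding frontier_gain_def using frontier_edge[OF assms] deg_pos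
  by (intro nn_integral_of_nat_indicator_eq_one emeasure_requests_component) auto

lemma expected_inform_time_ge:
  assumes K: "request_kernel K"
  shows "of_nat (path_potential {r}) \<le> 2 * expected_inform_time r K u"
proof (rule potential_le_expected_inform_time[OF K, where G = frontier_gain and B = "path_potential {r}"])
  fix hs x assume inv: "hist_inv hs" and u: "u \<notin> current r hs" and x: "x \<in> set_pmf (K hs)"
  have S: "rooted_subtree (current r hs)" using inv by (simp add: hist_inv_def)
  have "path_potential (current r hs) \<le> path_potential (snd x)
     + (if fst x (P!frontier (current r hs)) = P!(frontier (current r hs) - 1) then deg E (P!frontier (current r hs)) else 0)"
    using K S x u requests_nbrs[OF request_kernel_requests[OF K S x]]
    by (intro path_potential_round_ge) (auto simp: request_kernel_def)
  then show "of_nat (path_potential (current r hs)) \<le> of_nat (path_potential (snd x)) + frontier_gain (current r hs) (fst x)"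
    unfolding frontier_gain_def by (simp split: if_splits flip: of_nat_add)
qed (auto simp: path_potential_informed nn_integral_frontier_gain path_potential_le_root)

lemma pull_kernel_support:
  "x \<in> set_pmf (pull_kernel V E r hs) \<Longrightarrow> snd x = current r hs \<union> {w \<in> V - current r hs. fst x w \<in> current r hs}"
  unfolding pull_kernel_def Let_def by auto

lemma request_kernel_pull: "request_kernel (pull_kernel V E r)"
  unfolding request_kernel_def pull_kernel_def Let_def by (auto simp: pmf.map_comp o_def)

lemma pull_expected_inform_time_le: "expected_inform_time r (pull_kernel V E r) u \<le> of_nat (path_potential {r})"
proof (rule expected_inform_time_le_potential[OF request_kernel_pull, of _ frontier_gain])
  fix hs x assume inv: "hist_inv hs" and u: "u \<notin> current r hs" and x: "x \<in> set_pmf (pull_kernel V E r hs)"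
  let ?S = "current r hs" and ?q = "frontier (current r hs)"
  have S: "rooted_subtree ?S" using inv by (simp add: hist_inv_def)
  have "path_potential (snd x) + (if fst x (P!?q) = P!(?q - 1) then deg E (P!?q) else 0) \<le> path_potential ?S"
  proof (cases "fst x (P!?q) = P!(?q - 1)")
    case True
    then have "P!?q \<in> snd x" using pull_kernel_support[OF x] frontier_edge[OF S u] by auto
    then show ?thesis using True path_potential_frontier_informed[OF S u] pull_kernel_support[OF x] by simp
  next
    case False
    then show ?thesis using path_potential_antimono pull_kernel_support[OF x] by simp
  qed
  then show "of_nat (path_potential (snd x)) + frontier_gain ?S (fst x) \<le> of_nat (path_potential ?S)"
    unfolding frontier_gain_def by (simp split: if_splits flip: of_nat_add)
qed (auto simp: path_potential_informed nn_integral_frontier_gain)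


subsection \<open>RPull\<close>

lemma request_kernel_rpull_adv:
  assumes adv: "valid_adversary V r adv" shows "request_kernel (rpull_adv_kernel V E r adv)"
  unfolding request_kernel_def
proof (intro allI impI conjI ballI)
  fix hs
  let ?S = "current r hs"
  show "map_pmf fst (rpull_adv_kernel V E r adv hs) = requests V E ?S"
    unfolding rpull_adv_kernel_def Let_def by (simp add: pmf.map_comp o_def)
  fix x assume "x \<in> set_pmf (rpull_adv_kernel V E r adv hs)"
  then obtain c where x: "x = (c, ?S \<union> adv hs c ` {v \<in> ?S. req_set V ?S c v \<noteq> {}})"
    unfolding rpull_adv_kernel_def Let_def by auto
  show "?S \<subseteq> snd x" using x by auto
  have served: "adv hs c v \<in> req_set V ?S c v" if "v \<in> ?S" "req_set V ?S c v \<noteq> {}" for v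
    using adv that unfolding valid_adversary_def by blast
  show "snd x \<subseteq> ?S \<union> {w \<in> V - ?S. fst x w \<in> ?S}"
  proof
    fix w assume "w \<in> snd x"
    then consider "w \<in> ?S" | v where "v \<in> ?S" "req_set V ?S c v \<noteq> {}" "w = adv hs c v"
      using x by auto
    then show "w \<in> ?S \<union> {w \<in> V - ?S. fst x w \<in> ?S}"
      by cases (use served x in \<open>auto simp: req_set_def\<close>)
  qed
qed

lemma request_kernel_rpull_random: "request_kernel (rpull_random_kernel V E r)"
  unfolding request_kernel_def
proof (intro allI impI conjI ballI)
  fix hs assume S: "rooted_subtree (current r hs)"
  let ?S = "current r hs"
  show "map_pmf fst (rpull_random_kernel V E r hs) = requests V E ?S"
    unfolding rpull_random_kernel_def Let_def
    by (simp add: map_bind_pmf pmf.map_comp o_def map_pmf_const bind_return_pmf')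
  fix x assume "x \<in> set_pmf (rpull_random_kernel V E r hs)"
  then obtain c sel where x: "x = (c, ?S \<union> sel ` {v \<in> ?S. req_set V ?S c v \<noteq> {}})"
    and sel: "sel \<in> set_pmf (Pi_pmf {v \<in> ?S. req_set V ?S c v \<noteq> {}} undefined (\<lambda>v. pmf_of_set (req_set V ?S c v)))"
    unfolding rpull_random_kernel_def Let_def by auto
  have fin: "finite {v \<in> ?S. req_set V ?S c v \<noteq> {}}"
    using S finite_V by (auto simp: rooted_subtree_def intro: finite_subset)
  have served: "sel v \<in> req_set V ?S c v" if "v \<in> ?S" "req_set V ?S c v \<noteq> {}" for v
  proof -
    have "sel v \<in> set_pmf (pmf_of_set (req_set V ?S c v))"
      using sel that unfolding set_Pi_pmf[OF fin] by (simp add: PiE_dflt_def)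
    moreover have "finite (req_set V ?S c v)" using finite_V by (simp add: req_set_def)
    ultimately show ?thesis using that by simp
  qed
  show "snd x \<subseteq> ?S \<union> {w \<in> V - ?S. fst x w \<in> ?S}"
  proof
    fix w assume "w \<in> snd x"
    then consider "w \<in> ?S" | v where "v \<in> ?S" "req_set V ?S c v \<noteq> {}" "w = sel v"
      using x by auto
    then show "w \<in> ?S \<union> {w \<in> V - ?S. fst x w \<in> ?S}"
      by cases (use served x in \<open>auto simp: req_set_def\<close>)
  qed
  show "?S \<subseteq> snd x" using x by auto
qed

definition competing_request :: "nat set \<Rightarrow> (nat \<Rightarrow> nat) \<Rightarrow> bool" where
  "competing_request S c \<longleftrightarrow>
     (\<exists>v\<in>nbrs E (P!(frontier S - 1)) - S - {P!frontier S}. c v = P!(frontier S - 1))"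

definition adv_potential :: "nat set \<Rightarrow> nat" where
  "adv_potential S = (if u \<in> S then 0 else card (nbrs E (P!(frontier S - 1)) - S) + 2 * path_potential S)"

definition adv_gain :: "nat set \<Rightarrow> (nat \<Rightarrow> nat) \<Rightarrow> ennreal" where
  "adv_gain S c = indicator {c. competing_request S c} c
     + of_nat (deg E (P!frontier S)) * indicator {c. \<not> competing_request S c \<and> c (P!frontier S) = P!(frontier S - 1)} c"

lemma nn_integral_adv_gain:
  assumes "rooted_subtree S" "u \<notin> S" shows "(\<integral>\<^sup>+c. adv_gain S c \<partial>requests V E S) = 1"
proof -
  let ?a = "P!frontier S"
  have "V - S = insert ?a (V - S - {?a})" using frontier_edge[OF assms] by auto
  then have "requests V E S = Pi_pmf (insert ?a (V - S - {?a})) undefined (\<lambda>w. pmf_of_set (nbrs E w))"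
    unfolding requests_def by simp
  moreover have "(\<integral>\<^sup>+c. adv_gain S c \<partial>Pi_pmf (insert ?a (V - S - {?a})) undefined (\<lambda>w. pmf_of_set (nbrs E w))) = 1"
    unfolding adv_gain_def using finite_V frontier_edge[OF assms] deg_pos
    by (intro nn_integral_Pi_pmf_event_or_coordinate emeasure_pmf_of_nbrs)
      (auto simp: competing_request_def)
  ultimately show ?thesis by simp
qed

lemma frontier_advance:
  assumes S: "rooted_subtree S" and uS: "u \<notin> S" and "S \<subseteq> S'"
    and S': "S' \<subseteq> S \<union> {w \<in> V - S. c w \<in> S}" and c: "\<And>w. w \<in> V - S \<Longrightarrow> c w \<in> nbrs E w"
    and "rooted_subtree S'" "u \<notin> S'" and a: "P!frontier S \<in> S'"
  shows "frontier S' = Suc (frontier S)"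
proof -
  note q = frontier_spec[OF S uS] and q' = frontier_spec[OF assms(6,7)]
  have "frontier S < k" using a assms(7) P_k q(2) by (cases "frontier S = k") auto
  then have "P!Suc (frontier S) \<notin> S'"
    using newly_informed_path_node[OF S uS S' c, of "Suc (frontier S)"] q(5) by auto
  moreover have "P!l \<in> S'" if "l \<le> frontier S" for l
    using that q(4) a \<open>S \<subseteq> S'\<close> by (cases "l = frontier S") auto
  ultimately have "\<not> frontier S' \<le> frontier S" "\<not> Suc (frontier S) < frontier S'"
    using q'(3,4) by blast+
  then show ?thesis by simp
qed

lemma frontier_stay:
  assumes S: "rooted_subtree S" and uS: "u \<notin> S" and "S \<subseteq> S'"
    and "rooted_subtree S'" "u \<notin> S'" and "P!frontier S \<notin> S'"
  shows "frontier S' = frontier S"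
proof -
  note q = frontier_spec[OF S uS] and q' = frontier_spec[OF assms(4,5)]
  have "\<not> frontier S < frontier S'" using q'(4) assms(6) by blast
  moreover have "\<not> frontier S' < frontier S" using q(4) q'(3) assms(3) by blast
  ultimately show ?thesis by simp
qed

lemma adversary_serves:
  assumes adv: "valid_adversary V r adv" and "v \<in> current r hs" and "w \<in> V - current r hs" "c w = v"
  shows "adv hs c v \<in> current r hs \<union> adv hs c ` {v \<in> current r hs. req_set V (current r hs) c v \<noteq> {}}"
    and "adv hs c v \<in> V - current r hs" and "c (adv hs c v) = v"
proof -
  have ne: "req_set V (current r hs) c v \<noteq> {}" using assms(3,4) by (auto simp: req_set_def)
  then have "adv hs c v \<in> req_set V (current r hs) c v" using adv assms(2) unfolding valid_adversary_def by blast
  then show "adv hs c v \<in> V - current r hs" "c (adv hs c v) = v" by (auto simp: req_set_def)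
  show "adv hs c v \<in> current r hs \<union> adv hs c ` {v \<in> current r hs. req_set V (current r hs) c v \<noteq> {}}"
    using assms(2) ne by blast
qed

lemma rpull_adv_kernel_support:
  assumes "x \<in> set_pmf (rpull_adv_kernel V E r adv hs)"
  shows "fst x \<in> set_pmf (requests V E (current r hs))"
    and "snd x = current r hs \<union> adv hs (fst x) ` {v \<in> current r hs. req_set V (current r hs) (fst x) v \<noteq> {}}"
proof -
  obtain c where "c \<in> set_pmf (requests V E (current r hs))"
    and "x = (c, current r hs \<union> adv hs c ` {v \<in> current r hs. req_set V (current r hs) c v \<noteq> {}})"
    using assms unfolding rpull_adv_kernel_def Let_def by auto
  then show "fst x \<in> set_pmf (requests V E (current r hs))"
    and "snd x = current r hs \<union> adv hs (fst x) ` {v \<in> current r hs. req_set V (current r hs) (fst x) v \<noteq> {}}"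
    by simp_all
qed

lemma parent_nbrs_shrink:
  assumes adv: "valid_adversary V r adv" and x: "x \<in> set_pmf (rpull_adv_kernel V E r adv hs)"
    and S: "rooted_subtree (current r hs)" and uS: "u \<notin> current r hs"
    and a: "P!frontier (current r hs) \<notin> snd x"
  defines "S \<equiv> current r hs" and "b \<equiv> P!(frontier (current r hs) - 1)"
  shows "competing_request S (fst x) \<longrightarrow> card (nbrs E b - snd x) + 1 \<le> card (nbrs E b - S)"
    and "\<not> competing_request S (fst x) \<longrightarrow> fst x (P!frontier S) \<noteq> b"
proof -
  have b: "b \<in> S" using frontier_edge[OF S uS] by (simp add: S_def b_def)
  have c: "\<And>w. w \<in> V - S \<Longrightarrow> fst x w \<in> nbrs E w"
    using requests_nbrs rpull_adv_kernel_support(1)[OF x] by (simp add: S_def)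
  have new_nbr: "adv hs (fst x) b \<in> snd x \<and> adv hs (fst x) b \<in> nbrs E b - S \<and> fst x (adv hs (fst x) b) = b"
    if "w \<in> V - S" "fst x w = b" for w
  proof -
    note served = adversary_serves[where c = "fst x", OF adv b[unfolded S_def] that[unfolded S_def]]
    then have "E (adv hs (fst x) b) b" using c[of "adv hs (fst x) b"] by (simp add: S_def nbrs_def)
    then show ?thesis using served edge_sym rpull_adv_kernel_support(2)[OF x] by (simp add: S_def nbrs_def)
  qed
  show "competing_request S (fst x) \<longrightarrow> card (nbrs E b - snd x) + 1 \<le> card (nbrs E b - S)"
  proof
    assume "competing_request S (fst x)"
    then obtain v where "v \<in> nbrs E b - S" "fst x v = b"
      by (auto simp: competing_request_def S_def b_def)
    then have w: "adv hs (fst x) b \<in> snd x" "adv hs (fst x) b \<in> nbrs E b - S"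
      using new_nbr[of v] nbrs_subset by auto
    have "S \<subseteq> snd x" using rpull_adv_kernel_support(2)[OF x] by (auto simp: S_def)
    then have "nbrs E b - snd x \<subseteq> (nbrs E b - S) - {adv hs (fst x) b}" using w(1) by auto
    then have "card (nbrs E b - snd x) \<le> card ((nbrs E b - S) - {adv hs (fst x) b})"
      by (intro card_mono) (simp_all add: finite_nbrs)
    also have "\<dots> = card (nbrs E b - S) - 1" using w(2) by simp
    finally show "card (nbrs E b - snd x) + 1 \<le> card (nbrs E b - S)"
      using w(2) card_gt_0_iff[of "nbrs E b - S"] finite_nbrs[of b] by auto
  qed
  show "\<not> competing_request S (fst x) \<longrightarrow> fst x (P!frontier S) \<noteq> b"
  proof (intro impI notI)
    assume "\<not> competing_request S (fst x)" and "fst x (P!frontier S) = b"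
    then show False using new_nbr[of "P!frontier S"] frontier_edge[OF S uS] a
      by (auto simp: competing_request_def S_def b_def)
  qed
qed

lemma deg_frontier_le_path_potential:
  assumes "rooted_subtree S" "u \<notin> S" shows "deg E (P!frontier S) \<le> path_potential S"
  using path_potential_frontier_informed[OF assms subset_insertI[of S "P!frontier S"]] by simp

lemma adv_potential_round:
  assumes adv: "valid_adversary V r adv" and x: "x \<in> set_pmf (rpull_adv_kernel V E r adv hs)"
    and S: "rooted_subtree (current r hs)" and uS: "u \<notin> current r hs"
  defines "S \<equiv> current r hs" and "a \<equiv> P!frontier (current r hs)" and "b \<equiv> P!(frontier (current r hs) - 1)"
  shows "adv_potential (snd x) + (if competing_request S (fst x) then 1 else if fst x a = b then deg E a else 0)
           \<le> adv_potential S"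
proof -
  note K = request_kernel_rpull_adv[OF adv]
  have sub: "S \<subseteq> snd x" and S': "rooted_subtree (snd x)"
    using request_kernel_step[OF K S x] by (simp_all add: S_def)
  have sub2: "snd x \<subseteq> S \<union> {w \<in> V - S. fst x w \<in> S}"
    using K S x unfolding request_kernel_def S_def by blast
  have c: "\<And>w. w \<in> V - S \<Longrightarrow> fst x w \<in> nbrs E w"
    using requests_nbrs[OF request_kernel_requests[OF K S x]] by (simp add: S_def)
  have "1 \<le> deg E a" using deg_pos frontier_edge[OF S uS] by (simp add: a_def Suc_le_eq)
  then have gain: "(if competing_request S (fst x) then 1 else if fst x a = b then deg E a else 0) \<le> deg E a"
    by simp
  have f: "deg E a \<le> path_potential S"
    using deg_frontier_le_path_potential[OF S uS] by (simp add: S_def a_def)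
  show ?thesis
  proof (cases "u \<in> snd x")
    case True
    then show ?thesis using gain f uS by (simp add: adv_potential_def S_def)
  next
    case uS': False
    show ?thesis
    proof (cases "a \<in> snd x")
      case True
      then have "frontier (snd x) = Suc (frontier S)"
        using frontier_advance[OF S[folded S_def] uS[folded S_def] sub sub2 c S' uS'] by (simp add: a_def S_def)
      moreover have "card (nbrs E a - snd x) \<le> deg E a"
        unfolding deg_def by (rule card_mono[OF finite_nbrs]) auto
      moreover have "path_potential (snd x) + deg E a \<le> path_potential S"
        using path_potential_frontier_informed[OF S[folded S_def] uS[folded S_def] sub] True
        by (simp add: a_def S_def)
      ultimately show ?thesis using gain uS' uS by (simp add: adv_potential_def a_def S_def)
    next
      case False
      then have "frontier (snd x) = frontier S"
        using frontier_stay[OF S[folded S_def] uS[folded S_def] sub S' uS'] by (simp add: a_def S_def)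
      moreover have "card (nbrs E b - snd x) \<le> card (nbrs E b - S)"
        using sub by (intro card_mono) (auto simp: finite_nbrs)
      moreover note parent_nbrs_shrink[OF adv x S uS] path_potential_antimono[OF sub]
      ultimately show ?thesis using False uS' uS
        by (auto simp: adv_potential_def a_def b_def S_def)
    qed
  qed
qed

lemma rpull_adv_expected_inform_time_le:
  assumes adv: "valid_adversary V r adv"
  shows "expected_inform_time r (rpull_adv_kernel V E r adv) u \<le> of_nat (adv_potential {r})"
proof (rule expected_inform_time_le_potential[OF request_kernel_rpull_adv[OF adv], of _ adv_gain])
  fix hs x assume inv: "hist_inv hs" and u: "u \<notin> current r hs" and x: "x \<in> set_pmf (rpull_adv_kernel V E r adv hs)"
  have S: "rooted_subtree (current r hs)" using inv by (simp add: hist_inv_def)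
  let ?S = "current r hs" and ?a = "P!frontier (current r hs)" and ?b = "P!(frontier (current r hs) - 1)"
  let ?g = "if competing_request ?S (fst x) then 1 else if fst x ?a = ?b then deg E ?a else 0"
  have "(of_nat (adv_potential (snd x) + ?g) :: ennreal) \<le> of_nat (adv_potential ?S)"
    using adv_potential_round[OF adv x S u] by (simp only: of_nat_le_iff)
  then show "of_nat (adv_potential (snd x)) + adv_gain ?S (fst x) \<le> of_nat (adv_potential ?S)"
    unfolding adv_gain_def by (cases "competing_request ?S (fst x)"; cases "fst x ?a = ?b") (simp_all add: add.commute)
qed (auto simp: adv_potential_def nn_integral_adv_gain)

lemma adv_potential_root: "adv_potential {r} \<le> 2 * path_degree_sum E r u"
proof -
  have "P!(frontier {r} - 1) = r" using frontier_spec(4)[OF rooted_subtree_root] frontier_spec(1)[OF rooted_subtree_root] target_ne_root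
    by simp
  moreover have "card (nbrs E r - {r}) \<le> deg E r" unfolding deg_def by (rule card_mono[OF finite_nbrs]) auto
  ultimately show ?thesis using target_ne_root path_degree_sum_eq by (simp add: adv_potential_def)
qed


lemma expected_inform_time_lower:
  assumes "request_kernel K"
  shows "ennreal (1/2 * (real (path_degree_sum E r u) - real (deg E r))) \<le> expected_inform_time r K u"
  using ennreal_half_le[OF expected_inform_time_ge[OF assms]] by (simp add: path_degree_sum_eq)

lemma pull_expected_inform_time_upper:
  "expected_inform_time r (pull_kernel V E r) u \<le> ennreal (1 * (real (path_degree_sum E r u) - real (deg E r)))"
  using pull_expected_inform_time_le by (simp add: path_degree_sum_eq ennreal_of_nat_eq_real_of_nat)

lemma rpull_adv_expected_inform_time_upper:
  assumes "valid_adversary V r adv"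
  shows "expected_inform_time r (rpull_adv_kernel V E r adv) u \<le> ennreal (2 * real (path_degree_sum E r u))"
proof -
  have "expected_inform_time r (rpull_adv_kernel V E r adv) u \<le> of_nat (adv_potential {r})"
    by (rule rpull_adv_expected_inform_time_le[OF assms])
  also have "\<dots> \<le> of_nat (2 * path_degree_sum E r u)" using adv_potential_root by (simp only: of_nat_le_iff)
  finally show ?thesis by (simp add: ennreal_of_nat_eq_real_of_nat)
qed

end

theorem lemma1:
  shows "(\<exists>c C :: real. c > 0 \<and> C > 0 \<and>
           (\<forall>(V :: nat set) E r u. is_tree V E \<and> r \<in> V \<and> u \<in> V \<and> u \<noteq> r \<longrightarrow>
              ennreal (c * (real (path_degree_sum E r u) - real (deg E r)))
                \<le> expected_inform_time r (pull_kernel V E r) u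
            \<and> expected_inform_time r (pull_kernel V E r) u
                \<le> ennreal (C * (real (path_degree_sum E r u) - real (deg E r)))))
       \<and> (\<exists>c :: real. c > 0 \<and>
           (\<forall>(V :: nat set) E r u. is_tree V E \<and> r \<in> V \<and> u \<in> V \<and> u \<noteq> r \<longrightarrow>
              ennreal (c * (real (path_degree_sum E r u) - real (deg E r)))
                \<le> expected_inform_time r (rpull_random_kernel V E r) u
            \<and> (\<forall>adv. valid_adversary V r adv \<longrightarrow>
                ennreal (c * (real (path_degree_sum E r u) - real (deg E r)))
                  \<le> expected_inform_time r (rpull_adv_kernel V E r adv) u)))
       \<and> (\<exists>C :: real. C > 0 \<and>
           (\<forall>(V :: nat set) E r u adv. is_tree V E \<and> r \<in> V \<and> u \<in> V \<and> u \<noteq> r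
                \<and> valid_adversary V r adv \<longrightarrow>
              expected_inform_time r (rpull_adv_kernel V E r adv) u
                \<le> ennreal (C * real (path_degree_sum E r u))))"
  apply (intro conjI)
  subgoal
    by (rule exI[of _ "1/2"], rule exI[of _ 1], intro conjI allI impI)
      (blast intro: rumor_tree.intro rumor_tree.expected_inform_time_lower rumor_tree.request_kernel_pull
        rumor_tree.pull_expected_inform_time_upper | simp)+
  subgoal
    by (rule exI[of _ "1/2"], intro conjI allI impI)
      (blast intro: rumor_tree.intro rumor_tree.expected_inform_time_lower
        rumor_tree.request_kernel_rpull_random rumor_tree.request_kernel_rpull_adv | simp)+
  subgoal
    by (rule exI[of _ 2], intro conjI allI impI)
      (blast intro: rumor_tree.intro rumor_tree.rpull_adv_expected_inform_time_upper | simp)+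
  done

end
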